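(* Let $(p,m,r)\in\mathbb{Z}_{\ge0}^3$ with $2p+m+r=n$. Then the variety $\mathscr{Z}_{p,m,r}$ is irreducible, and $\mathscr{Z}_{p,m,r}$ equals the Zariski closure of the image of the morphism $\phi_{p,m,r}:GL_n(\mathbb{C})\times\mathbb{C}^{p+m}\times\mathbb{C}^{2p+r}\to\mathscr{Z}_n$ defined by $\phi_{p,m,r}(g,(a_1,\dots,a_{p+m}),(b_1,c_1,\dots,b_p,c_p,b_{p+1},\dots,b_{p+r}))=(gAg^{-1},gBg^{-1})$, where $A=\mathrm{diag}(a_1,-a_1,\dots,a_p,-a_p,a_{p+1},\dots,a_{p+m},0,\dots,0)$ ($r$ zeros) and $B=\mathrm{diag}\left(\begin{bmatrix}0&b_1\\c_1&0\end{bmatrix},\dots,\begin{bmatrix}0&b_p\\c_p&0\end{bmatrix},0,\dots,0,b_{p+1},\dots,b_{p+r}\right)$ (with $m$ zeros).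
   Context: $\mathscr{Z}_n=\{(A,B)\in M_n(\mathbb{C})^2 : AB+BA=0\}$, with $GL_n(\mathbb{C})$ acting by simultaneous conjugation. $\mathscr{Z}_{p,m,r}$ is the Zariski closure in $\mathscr{Z}_n$ of the union of the $GL_n$-orbits of all pairs $(A,B)\in\mathscr{Z}_n$ with $A=\mathrm{diag}(a_1,-a_1,\dots,a_p,-a_p,a_{p+1},\dots,a_{p+m},0,\dots,0)$ ($r$ zeros), where $a_i\in\mathbb{C}^*$ and $a_i\ne\pm a_j$ for $i\ne j$. *)

theory Defs
  imports Complex_Main "Jordan_Normal_Form.Matrix"
begin

type_synonym cpair = "complex mat \<times> complex mat"

inductive_set poly_fun :: "nat \<Rightarrow> (cpair \<Rightarrow> complex) set" for n :: nat where
  pf_const: "(\<lambda>_. c) \<in> poly_fun n"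
| pf_fst: "i < n \<Longrightarrow> j < n \<Longrightarrow> (\<lambda>X. fst X $$ (i, j)) \<in> poly_fun n"
| pf_snd: "i < n \<Longrightarrow> j < n \<Longrightarrow> (\<lambda>X. snd X $$ (i, j)) \<in> poly_fun n"
| pf_add: "f \<in> poly_fun n \<Longrightarrow> g \<in> poly_fun n \<Longrightarrow> (\<lambda>X. f X + g X) \<in> poly_fun n"
| pf_mult: "f \<in> poly_fun n \<Longrightarrow> g \<in> poly_fun n \<Longrightarrow> (\<lambda>X. f X * g X) \<in> poly_fun n"

definition pair_space :: "nat \<Rightarrow> cpair set" where
  "pair_space n = {X. fst X \<in> carrier_mat n n \<and> snd X \<in> carrier_mat n n}"

definition zariski_closed :: "nat \<Rightarrow> cpair set \<Rightarrow> bool" where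
  "zariski_closed n S \<longleftrightarrow>
     (\<exists>F \<subseteq> poly_fun n. S = {X \<in> pair_space n. \<forall>f\<in>F. f X = 0})"

definition zariski_closure :: "nat \<Rightarrow> cpair set \<Rightarrow> cpair set" where
  "zariski_closure n S = \<Inter>{T. zariski_closed n T \<and> S \<subseteq> T}"

definition zariski_irreducible :: "nat \<Rightarrow> cpair set \<Rightarrow> bool" where
  "zariski_irreducible n S \<longleftrightarrow> S \<noteq> {} \<and>
     (\<forall>C1 C2. zariski_closed n C1 \<longrightarrow> zariski_closed n C2 \<longrightarrow> S \<subseteq> C1 \<union> C2
        \<longrightarrow> S \<subseteq> C1 \<or> S \<subseteq> C2)"

definition anticomm_var :: "nat \<Rightarrow> cpair set" where
  "anticomm_var n = {(A, B). A \<in> carrier_mat n n \<and> B \<in> carrier_mat n n \<and> A * B + B * A = 0\<^sub>m n n}"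

text \<open>Diagonal entries (a_1,-a_1,...,a_p,-a_p,a_{p+1},...,a_{p+m},0,...,0) (r zeros);
 the parameter a is 0-indexed: a 0 = a_1, etc.\<close>
definition diag_entries :: "nat \<Rightarrow> nat \<Rightarrow> nat \<Rightarrow> (nat \<Rightarrow> complex) \<Rightarrow> complex list" where
  "diag_entries p m r a =
     concat (map (\<lambda>i. [a i, - a i]) [0..<p]) @ map a [p..<p+m] @ replicate r 0"

definition A_mat :: "nat \<Rightarrow> nat \<Rightarrow> nat \<Rightarrow> (nat \<Rightarrow> complex) \<Rightarrow> complex mat" where
  "A_mat p m r a = (let n = 2*p+m+r; d = diag_entries p m r a in
     mat n n (\<lambda>(i, j). if i = j then d ! i else 0))"

text \<open>B = diag([0 b_1; c_1 0], ..., [0 b_p; c_p 0], 0 (m times), b_{p+1}, ..., b_{p+r}),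
 0-indexed: b k = b_{k+1}, c k = c_{k+1}.\<close>
definition B_mat :: "nat \<Rightarrow> nat \<Rightarrow> nat \<Rightarrow> (nat \<Rightarrow> complex) \<Rightarrow> (nat \<Rightarrow> complex) \<Rightarrow> complex mat" where
  "B_mat p m r b c = (let n = 2*p+m+r in
     mat n n (\<lambda>(i, j).
       if i < 2*p \<and> j < 2*p \<and> i div 2 = j div 2 \<and> even i \<and> j = i + 1 then b (i div 2)
       else if i < 2*p \<and> j < 2*p \<and> i div 2 = j div 2 \<and> odd i \<and> i = j + 1 then c (i div 2)
       else if 2*p+m \<le> i \<and> i = j then b (p + (i - (2*p+m)))
       else 0))"

definition GL_inv :: "nat \<Rightarrow> complex mat \<Rightarrow> complex mat \<Rightarrow> bool" where
  "GL_inv n g h \<longleftrightarrow> g \<in> carrier_mat n n \<and> h \<in> carrier_mat n n \<and> g * h = 1\<^sub>m n \<and> h * g = 1\<^sub>m n"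

definition generic_params :: "nat \<Rightarrow> nat \<Rightarrow> (nat \<Rightarrow> complex) \<Rightarrow> bool" where
  "generic_params p m a \<longleftrightarrow> (\<forall>i < p+m. a i \<noteq> 0) \<and>
     (\<forall>i < p+m. \<forall>j < p+m. i \<noteq> j \<longrightarrow> a i \<noteq> a j \<and> a i \<noteq> - a j)"

definition Z_pmr :: "nat \<Rightarrow> nat \<Rightarrow> nat \<Rightarrow> cpair set" where
  "Z_pmr p m r = (let n = 2*p+m+r in zariski_closure n
     {(g * A_mat p m r a * h, g * B * h) | g h a B.
        GL_inv n g h \<and> generic_params p m a \<and> (A_mat p m r a, B) \<in> anticomm_var n})"

definition phi_image :: "nat \<Rightarrow> nat \<Rightarrow> nat \<Rightarrow> cpair set" where
  "phi_image p m r = (let n = 2*p+m+r in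
     {(g * A_mat p m r a * h, g * B_mat p m r b c * h) | g h a b c. GL_inv n g h})"

end

(*
  Let B(b, c, T) be the matrix B of the statement with its trailing r x r block replaced by an
  arbitrary upper triangular matrix T. Since adj g = det g * g^-1 and A(a), B(b, c, T) are linear
  in their parameters, Psi(g, a, b, c, T) = (g A(a) adj g, g B(b, c, T) adj g) is a polynomial map
  whose image over {det g <> 0} is the union of the orbits of all pairs (A(a), B(b, c, T)). The
  closure of this image is irreducible because polynomial functions on affine space form a domain.

  For generic a, anticommutation with A(a) forces B into the shape B(b, c, C) with an arbitrary
  trailing block C, which Schur triangularisation makes upper triangular. So the generic orbits
  lie in the image of Psi, and they contain the image of the dense set where a is generic. The
  image of phi is the case of diagonal T, and it contains the image of the dense set where T has
  distinct diagonal entries, hence is diagonalisable. Therefore Z_{p,m,r}, the closure of the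
  image of phi and the closure of the image of Psi coincide.
*)

theory Submission
  imports Defs "Jordan_Normal_Form.Jordan_Normal_Form_Existence"
begin

section \<open>Polynomial functions of parameters\<close>

inductive_set mpoly_fun :: "(('v \<Rightarrow> complex) \<Rightarrow> complex) set" where
  mpoly_fun_const: "(\<lambda>_. c) \<in> mpoly_fun"
| mpoly_fun_var: "(\<lambda>x. x v) \<in> mpoly_fun"
| mpoly_fun_add: "f \<in> mpoly_fun \<Longrightarrow> g \<in> mpoly_fun \<Longrightarrow> (\<lambda>x. f x + g x) \<in> mpoly_fun"
| mpoly_fun_mult: "f \<in> mpoly_fun \<Longrightarrow> g \<in> mpoly_fun \<Longrightarrow> (\<lambda>x. f x * g x) \<in> mpoly_fun"

lemma mpoly_fun_diff: "f \<in> mpoly_fun \<Longrightarrow> g \<in> mpoly_fun \<Longrightarrow> (\<lambda>x. f x - g x) \<in> mpoly_fun"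
  using mpoly_fun_add[OF _ mpoly_fun_mult[OF mpoly_fun_const[of "-1"]]] by simp

lemma mpoly_fun_uminus: "f \<in> mpoly_fun \<Longrightarrow> (\<lambda>x. - f x) \<in> mpoly_fun"
  using mpoly_fun_diff[OF mpoly_fun_const[of 0]] by simp

lemma mpoly_fun_sum:
  "finite S \<Longrightarrow> (\<And>i. i \<in> S \<Longrightarrow> f i \<in> mpoly_fun) \<Longrightarrow> (\<lambda>x. \<Sum>i\<in>S. f i x) \<in> mpoly_fun"
  by (induction S rule: finite_induct) (auto intro: mpoly_fun.intros)

lemma mpoly_fun_prod:
  "finite S \<Longrightarrow> (\<And>i. i \<in> S \<Longrightarrow> f i \<in> mpoly_fun) \<Longrightarrow> (\<lambda>x. \<Prod>i\<in>S. f i x) \<in> mpoly_fun"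
  by (induction S rule: finite_induct) (auto intro: mpoly_fun.intros)

lemma mpoly_fun_If:
  "(P \<Longrightarrow> f \<in> mpoly_fun) \<Longrightarrow> (\<not> P \<Longrightarrow> g \<in> mpoly_fun) \<Longrightarrow> (\<lambda>x. if P then f x else g x) \<in> mpoly_fun"
  by (cases P) auto

lemma mpoly_fun_finite_support:
  assumes "f \<in> mpoly_fun"
  obtains V where "finite V" "\<And>x y. (\<forall>v\<in>V. x v = y v) \<Longrightarrow> f x = f y"
proof -
  from assms have "\<exists>V. finite V \<and> (\<forall>x y. (\<forall>v\<in>V. x v = y v) \<longrightarrow> f x = f y)"
  proof induction
    case (mpoly_fun_var v)
    show ?case by (rule exI[of _ "{v}"]) auto
  next
    case (mpoly_fun_add f g)
    then obtain V W where "finite V" "\<forall>x y. (\<forall>v\<in>V. x v = y v) \<longrightarrow> f x = f y"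
      "finite W" "\<forall>x y. (\<forall>v\<in>W. x v = y v) \<longrightarrow> g x = g y" by blast
    then show ?case by (intro exI[of _ "V \<union> W"]) (metis finite_UnI UnCI)
  next
    case (mpoly_fun_mult f g)
    then obtain V W where "finite V" "\<forall>x y. (\<forall>v\<in>V. x v = y v) \<longrightarrow> f x = f y"
      "finite W" "\<forall>x y. (\<forall>v\<in>W. x v = y v) \<longrightarrow> g x = g y" by blast
    then show ?case by (intro exI[of _ "V \<union> W"]) (metis finite_UnI UnCI)
  qed auto
  then show ?thesis using that by blast
qed

lemma mpoly_fun_restrict_line:
  "f \<in> mpoly_fun \<Longrightarrow> \<exists>q. \<forall>t. f (x(v := t)) = poly q t"
proof (induction rule: mpoly_fun.induct)
  case (mpoly_fun_const c)
  show ?case by (rule exI[of _ "[:c:]"]) simp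
next
  case (mpoly_fun_var w)
  show ?case by (rule exI[of _ "if v = w then [:0, 1:] else [:x w:]"]) simp
next
  case (mpoly_fun_add f g)
  then obtain q1 q2 where "\<forall>t. f (x(v := t)) = poly q1 t" "\<forall>t. g (x(v := t)) = poly q2 t" by blast
  then show ?case by (intro exI[of _ "q1 + q2"]) (simp del: fun_upd_apply)
next
  case (mpoly_fun_mult f g)
  then obtain q1 q2 where "\<forall>t. f (x(v := t)) = poly q1 t" "\<forall>t. g (x(v := t)) = poly q2 t" by blast
  then show ?case by (intro exI[of _ "q1 * q2"]) (simp del: fun_upd_apply)
qed

lemma mpoly_fun_finite_zeros_on_line:
  assumes "f \<in> mpoly_fun" "f x \<noteq> 0"
  shows "finite {t. f (x(v := t)) = 0}"
proof -
  obtain q where q: "\<And>t. f (x(v := t)) = poly q t"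
    using mpoly_fun_restrict_line[OF assms(1)] by blast
  have "poly q (x v) \<noteq> 0" using q[of "x v"] assms(2) by simp
  then have "q \<noteq> 0" by auto
  then show ?thesis using poly_roots_finite[of q] by (simp add: q)
qed

text \<open>Polynomial functions form a domain. The variables on which the two witnesses differ are
  changed one at a time, avoiding the finitely many zeros on each coordinate line.\<close>

lemma mpoly_fun_common_nonzero:
  assumes f: "f \<in> mpoly_fun" and g: "g \<in> mpoly_fun" and "f x \<noteq> 0" "g y \<noteq> 0"
  shows "\<exists>z. f z \<noteq> 0 \<and> g z \<noteq> 0"
proof -
  obtain V where "finite V" and V: "\<And>x' y'. (\<forall>v\<in>V. x' v = y' v) \<Longrightarrow> f x' = f y'"
    using mpoly_fun_finite_support[OF f] by blast
  have move: "f x' \<noteq> 0 \<Longrightarrow> g y \<noteq> 0 \<Longrightarrow> \<forall>v. v \<notin> V \<longrightarrow> x' v = y v \<Longrightarrow> \<exists>z. f z \<noteq> 0 \<and> g z \<noteq> 0"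
    for x'
    using \<open>finite V\<close>
  proof (induction V arbitrary: x' y rule: finite_induct)
    case empty
    then show ?case by (metis ext empty_iff)
  next
    case (insert v V)
    have "finite ({t. f (x'(v := t)) = 0} \<union> {t. g (y(v := t)) = 0})"
      using mpoly_fun_finite_zeros_on_line[of f x' v] mpoly_fun_finite_zeros_on_line[of g y v]
        f g insert.prems(1,2) by blast
    then obtain t where "f (x'(v := t)) \<noteq> 0" "g (y(v := t)) \<noteq> 0"
      using ex_new_if_finite[OF infinite_UNIV_char_0] by blast
    then show ?case
      by (rule insert.IH) (use insert.prems(3) in auto)
  qed
  have "f (\<lambda>v. if v \<in> V then x v else y v) = f x" by (rule V) simp
  then show ?thesis
    by (intro move[of "\<lambda>v. if v \<in> V then x v else y v"]) (use assms(3,4) in auto)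
qed

definition mpoly_mat :: "nat \<Rightarrow> nat \<Rightarrow> (('v \<Rightarrow> complex) \<Rightarrow> complex mat) \<Rightarrow> bool" where
  "mpoly_mat k l M \<longleftrightarrow>
     (\<forall>x. M x \<in> carrier_mat k l) \<and> (\<forall>i<k. \<forall>j<l. (\<lambda>x. M x $$ (i, j)) \<in> mpoly_fun)"

lemma mpoly_matD:
  "mpoly_mat k l M \<Longrightarrow> M x \<in> carrier_mat k l"
  "mpoly_mat k l M \<Longrightarrow> i < k \<Longrightarrow> j < l \<Longrightarrow> (\<lambda>x. M x $$ (i, j)) \<in> mpoly_fun"
  unfolding mpoly_mat_def by auto

lemma mpoly_mat_mat:
  "(\<And>i j. i < k \<Longrightarrow> j < l \<Longrightarrow> e i j \<in> mpoly_fun) \<Longrightarrow> mpoly_mat k l (\<lambda>x. mat k l (\<lambda>(i, j). e i j x))"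
  unfolding mpoly_mat_def by auto

lemma mpoly_mat_const: "C \<in> carrier_mat k l \<Longrightarrow> mpoly_mat k l (\<lambda>_. C)"
  unfolding mpoly_mat_def by (auto intro: mpoly_fun_const)

lemma mpoly_mat_mult:
  assumes M: "mpoly_mat k l M" and N: "mpoly_mat l q N"
  shows "mpoly_mat k q (\<lambda>x. M x * N x)"
proof -
  have c: "M x \<in> carrier_mat k l" "N x \<in> carrier_mat l q" for x
    using M N by (auto dest: mpoly_matD)
  have "(M x * N x) $$ (i, j) = (\<Sum>t<l. M x $$ (i, t) * N x $$ (t, j))"
    if "i < k" "j < q" for i j x
    using c[of x] that by (auto simp: scalar_prod_def atLeast0LessThan)
  moreover have "(\<lambda>x. \<Sum>t<l. M x $$ (i, t) * N x $$ (t, j)) \<in> mpoly_fun"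
    if "i < k" "j < q" for i j
    using that by (intro mpoly_fun_sum mpoly_fun_mult mpoly_matD[OF M] mpoly_matD[OF N]) auto
  moreover have "M x * N x \<in> carrier_mat k q" for x
    using mult_carrier_mat[OF c] .
  ultimately show ?thesis unfolding mpoly_mat_def by auto
qed

lemma mpoly_fun_det:
  assumes M: "mpoly_mat k k M"
  shows "(\<lambda>x. det (M x)) \<in> mpoly_fun"
proof -
  have "det (M x) = (\<Sum>\<pi> | \<pi> permutes {0..<k}. signof \<pi> * (\<Prod>i = 0..<k. M x $$ (i, \<pi> i)))" for x
    using det_def'[OF mpoly_matD(1)[OF M]] .
  moreover have "(\<lambda>x. \<Sum>\<pi> | \<pi> permutes {0..<k}. signof \<pi> * (\<Prod>i = 0..<k. M x $$ (i, \<pi> i)))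
      \<in> mpoly_fun"
    by (intro mpoly_fun_sum mpoly_fun_mult mpoly_fun_const mpoly_fun_prod mpoly_matD(2)[OF M])
      (auto simp: finite_permutations permutes_in_image)
  ultimately show ?thesis by simp
qed

lemma mpoly_mat_adj:
  assumes M: "mpoly_mat k k M"
  shows "mpoly_mat k k (\<lambda>x. adj_mat (M x))"
proof -
  have c: "M x \<in> carrier_mat k k" for x using mpoly_matD(1)[OF M] .
  have minor: "mpoly_mat (k - 1) (k - 1) (\<lambda>x. mat_delete (M x) j i)" for i j
  proof -
    have "mat_delete (M x) j i = mat (k - 1) (k - 1) (\<lambda>(i', j').
        M x $$ (if i' < j then i' else Suc i', if j' < i then j' else Suc j'))" for x
      unfolding mat_delete_def using c[of x] by auto
    moreover have "mpoly_mat (k - 1) (k - 1) (\<lambda>x. mat (k - 1) (k - 1) (\<lambda>(i', j').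
        M x $$ (if i' < j then i' else Suc i', if j' < i then j' else Suc j')))"
      by (intro mpoly_mat_mat mpoly_matD(2)[OF M]) auto
    ultimately show ?thesis by simp
  qed
  have "adj_mat (M x) = mat k k (\<lambda>(i, j). (-1) ^ (j + i) * det (mat_delete (M x) j i))" for x
    unfolding adj_mat_def cofactor_def using c[of x] by auto
  moreover have "mpoly_mat k k (\<lambda>x. mat k k (\<lambda>(i, j). (-1) ^ (j + i) * det (mat_delete (M x) j i)))"
    by (intro mpoly_mat_mat mpoly_fun_mult mpoly_fun_const mpoly_fun_det[OF minor])
  ultimately show ?thesis by simp
qed

lemma mpoly_mat_four_block:
  assumes "mpoly_mat s s A" "mpoly_mat s r B" "mpoly_mat r s C" "mpoly_mat r r D"
  shows "mpoly_mat (s + r) (s + r) (\<lambda>x. four_block_mat (A x) (B x) (C x) (D x))"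
proof -
  have c: "A x \<in> carrier_mat s s" "D x \<in> carrier_mat r r" for x
    using assms by (auto dest: mpoly_matD)
  have "four_block_mat (A x) (B x) (C x) (D x) $$ (i, j) =
      (if i < s then if j < s then A x $$ (i, j) else B x $$ (i, j - s)
       else if j < s then C x $$ (i - s, j) else D x $$ (i - s, j - s))"
    if "i < s + r" "j < s + r" for i j x
    using c[of x] that by auto
  moreover have "(\<lambda>x. if i < s then if j < s then A x $$ (i, j) else B x $$ (i, j - s)
      else if j < s then C x $$ (i - s, j) else D x $$ (i - s, j - s)) \<in> mpoly_fun"
    if "i < s + r" "j < s + r" for i j
    using that by (intro mpoly_fun_If; auto intro: assms[THEN mpoly_matD(2)])
  ultimately show ?thesis
    using assms unfolding mpoly_mat_def by (auto intro!: four_block_carrier_mat)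
qed

definition mpoly_pair_map :: "nat \<Rightarrow> (('v \<Rightarrow> complex) \<Rightarrow> cpair) \<Rightarrow> bool" where
  "mpoly_pair_map n \<Phi> \<longleftrightarrow> mpoly_mat n n (\<lambda>x. fst (\<Phi> x)) \<and> mpoly_mat n n (\<lambda>x. snd (\<Phi> x))"

lemma mpoly_pair_map_pair_space: "mpoly_pair_map n \<Phi> \<Longrightarrow> \<Phi> x \<in> pair_space n"
  unfolding mpoly_pair_map_def pair_space_def by (auto dest: mpoly_matD)

lemma poly_fun_comp_mpoly_pair_map:
  assumes "f \<in> poly_fun n" "mpoly_pair_map n \<Phi>"
  shows "(\<lambda>x. f (\<Phi> x)) \<in> mpoly_fun"
  using assms(1)
proof induction
  case (pf_fst i j)
  then show ?case using assms(2) unfolding mpoly_pair_map_def by (auto dest: mpoly_matD)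
next
  case (pf_snd i j)
  then show ?case using assms(2) unfolding mpoly_pair_map_def by (auto dest: mpoly_matD)
qed (auto intro: mpoly_fun.intros)

section \<open>Zariski closures of polynomial images\<close>

lemma zariski_closed_separate:
  assumes "zariski_closed n C" "X \<in> pair_space n" "X \<notin> C"
  obtains f where "f \<in> poly_fun n" "f X \<noteq> 0" "\<And>Y. Y \<in> C \<Longrightarrow> f Y = 0"
  using assms unfolding zariski_closed_def by blast

lemma subset_zariski_closure: "S \<subseteq> zariski_closure n S"
  unfolding zariski_closure_def by auto

lemma zariski_closure_minimal: "zariski_closed n T \<Longrightarrow> S \<subseteq> T \<Longrightarrow> zariski_closure n S \<subseteq> T"
  unfolding zariski_closure_def by auto

lemma zariski_closure_subset_closure:
  assumes "S \<subseteq> zariski_closure n T"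
  shows "zariski_closure n S \<subseteq> zariski_closure n T"
proof -
  have "{C. zariski_closed n C \<and> T \<subseteq> C} \<subseteq> {C. zariski_closed n C \<and> S \<subseteq> C}"
    using assms zariski_closure_minimal by blast
  then show ?thesis unfolding zariski_closure_def by (rule Inter_anti_mono)
qed

lemma zariski_closure_eq_sandwich:
  assumes "A \<subseteq> S" "S \<subseteq> B" "B \<subseteq> zariski_closure n A"
  shows "zariski_closure n S = zariski_closure n B"
proof
  show "zariski_closure n S \<subseteq> zariski_closure n B"
    using assms(2) subset_zariski_closure[of B n] by (intro zariski_closure_subset_closure) blast
  have "zariski_closure n B \<subseteq> zariski_closure n A"
    using assms(3) by (rule zariski_closure_subset_closure)
  also have "\<dots> \<subseteq> zariski_closure n S"
    using assms(1) subset_zariski_closure[of S n] by (intro zariski_closure_subset_closure) blast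
  finally show "zariski_closure n B \<subseteq> zariski_closure n S" .
qed

lemma in_zariski_closureI:
  assumes "X \<in> pair_space n" "\<And>f. f \<in> poly_fun n \<Longrightarrow> (\<forall>Y\<in>S. f Y = 0) \<Longrightarrow> f X = 0"
  shows "X \<in> zariski_closure n S"
  unfolding zariski_closure_def
proof (rule InterI, clarify)
  fix C assume C: "zariski_closed n C" "S \<subseteq> C"
  show "X \<in> C"
  proof (rule ccontr)
    assume "X \<notin> C"
    then obtain f where "f \<in> poly_fun n" "f X \<noteq> 0" "\<And>Y. Y \<in> C \<Longrightarrow> f Y = 0"
      using zariski_closed_separate[OF C(1) assms(1)] by blast
    then show False using assms(2) C(2) by blast
  qed
qed

lemma image_subset_zariski_closure_restrict:
  assumes \<Phi>: "mpoly_pair_map n \<Phi>" and w: "w \<in> mpoly_fun" and v: "v \<in> mpoly_fun" "\<exists>x. v x \<noteq> 0"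
  shows "\<Phi> ` {x. w x \<noteq> 0} \<subseteq> zariski_closure n (\<Phi> ` {x. w x \<noteq> 0 \<and> v x \<noteq> 0})"
proof (rule image_subsetI)
  fix y assume "y \<in> {x. w x \<noteq> 0}"
  then have "w y \<noteq> 0" by simp
  show "\<Phi> y \<in> zariski_closure n (\<Phi> ` {x. w x \<noteq> 0 \<and> v x \<noteq> 0})"
  proof (rule in_zariski_closureI[OF mpoly_pair_map_pair_space[OF \<Phi>]])
    fix f assume f: "f \<in> poly_fun n" and vanish: "\<forall>Y\<in>\<Phi> ` {x. w x \<noteq> 0 \<and> v x \<noteq> 0}. f Y = 0"
    have fw: "(\<lambda>x. f (\<Phi> x) * w x) \<in> mpoly_fun"
      using mpoly_fun_mult[OF poly_fun_comp_mpoly_pair_map[OF f \<Phi>] w] .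
    show "f (\<Phi> y) = 0"
    proof (rule ccontr)
      assume "f (\<Phi> y) \<noteq> 0"
      then have "f (\<Phi> y) * w y \<noteq> 0" using \<open>w y \<noteq> 0\<close> by simp
      moreover obtain x\<^sub>0 where "v x\<^sub>0 \<noteq> 0" using v(2) ..
      ultimately obtain z where "f (\<Phi> z) * w z \<noteq> 0" "v z \<noteq> 0"
        using mpoly_fun_common_nonzero[of _ v y x\<^sub>0, OF fw v(1)] by auto
      then show False using vanish by auto
    qed
  qed
qed

lemma zariski_irreducible_closure_image:
  assumes \<Phi>: "mpoly_pair_map n \<Phi>" and w: "w \<in> mpoly_fun" "\<exists>x. w x \<noteq> 0"
  shows "zariski_irreducible n (zariski_closure n (\<Phi> ` {x. w x \<noteq> 0}))"
  unfolding zariski_irreducible_def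
proof (intro conjI allI impI)
  let ?S = "\<Phi> ` {x. w x \<noteq> 0}"
  show "zariski_closure n ?S \<noteq> {}"
    using subset_zariski_closure[of ?S n] w(2) by blast
  fix C1 C2 assume C1: "zariski_closed n C1" and C2: "zariski_closed n C2"
    and cover: "zariski_closure n ?S \<subseteq> C1 \<union> C2"
  have "?S \<subseteq> C1 \<or> ?S \<subseteq> C2"
  proof (rule ccontr)
    assume "\<not> (?S \<subseteq> C1 \<or> ?S \<subseteq> C2)"
    then obtain x1 x2 where x: "w x1 \<noteq> 0" "\<Phi> x1 \<notin> C1" "w x2 \<noteq> 0" "\<Phi> x2 \<notin> C2" by blast
    obtain f1 where f1: "f1 \<in> poly_fun n" "f1 (\<Phi> x1) \<noteq> 0" "\<And>Y. Y \<in> C1 \<Longrightarrow> f1 Y = 0"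
      using zariski_closed_separate[OF C1 mpoly_pair_map_pair_space[OF \<Phi>] x(2)] by blast
    obtain f2 where f2: "f2 \<in> poly_fun n" "f2 (\<Phi> x2) \<noteq> 0" "\<And>Y. Y \<in> C2 \<Longrightarrow> f2 Y = 0"
      using zariski_closed_separate[OF C2 mpoly_pair_map_pair_space[OF \<Phi>] x(4)] by blast
    have "f1 (\<Phi> x1) * w x1 \<noteq> 0" "f2 (\<Phi> x2) * w x2 \<noteq> 0"
      using f1(2) f2(2) x(1,3) by simp_all
    then obtain z where z: "f1 (\<Phi> z) * w z \<noteq> 0" "f2 (\<Phi> z) * w z \<noteq> 0"
      using mpoly_fun_common_nonzero[of _ _ x1 x2, OF mpoly_fun_mult[OF poly_fun_comp_mpoly_pair_map[OF f1(1) \<Phi>] w(1)]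
          mpoly_fun_mult[OF poly_fun_comp_mpoly_pair_map[OF f2(1) \<Phi>] w(1)]] by blast
    then have "\<Phi> z \<in> C1 \<union> C2" using cover subset_zariski_closure[of ?S n] by auto
    then show False using z f1(3)[of "\<Phi> z"] f2(3)[of "\<Phi> z"] by auto
  qed
  then show "zariski_closure n ?S \<subseteq> C1 \<or> zariski_closure n ?S \<subseteq> C2"
    using zariski_closure_minimal C1 C2 by blast
qed

section \<open>Diagonal, invertible and similar matrices\<close>

definition diagonal_matrix :: "nat \<Rightarrow> (nat \<Rightarrow> 'a::zero) \<Rightarrow> 'a mat" where
  "diagonal_matrix n d = mat n n (\<lambda>(i, j). if i = j then d i else 0)"

lemma diagonal_matrix_carrier [simp]: "diagonal_matrix n d \<in> carrier_mat n n"
  and diagonal_matrix_dim [simp]: "dim_row (diagonal_matrix n d) = n" "dim_col (diagonal_matrix n d) = n"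
  and diagonal_matrix_index [simp]:
    "i < n \<Longrightarrow> j < n \<Longrightarrow> diagonal_matrix n d $$ (i, j) = (if i = j then d i else 0)"
  unfolding diagonal_matrix_def by auto

lemma diagonal_matrix_mult_index:
  fixes d :: "nat \<Rightarrow> 'a::comm_semiring_1"
  assumes B: "B \<in> carrier_mat n n" and ij: "i < n" "j < n"
  shows "(diagonal_matrix n d * B) $$ (i, j) = d i * B $$ (i, j)"
    and "(B * diagonal_matrix n d) $$ (i, j) = B $$ (i, j) * d j"
proof -
  let ?D = "diagonal_matrix n d"
  have "(?D * B) $$ (i, j) = (\<Sum>t\<in>{0..<n}. ?D $$ (i, t) * B $$ (t, j))"
    using B ij by (simp add: scalar_prod_def)
  also have "\<dots> = (\<Sum>t\<in>{0..<n}. if t = i then d i * B $$ (i, j) else 0)"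
    by (rule sum.cong) (use ij in auto)
  finally show "(?D * B) $$ (i, j) = d i * B $$ (i, j)"
    using ij by simp
  have "(B * ?D) $$ (i, j) = (\<Sum>t\<in>{0..<n}. B $$ (i, t) * ?D $$ (t, j))"
    using B ij by (simp add: scalar_prod_def)
  also have "\<dots> = (\<Sum>t\<in>{0..<n}. if t = j then B $$ (i, j) * d j else 0)"
    by (rule sum.cong) (use ij in auto)
  finally show "(B * ?D) $$ (i, j) = B $$ (i, j) * d j"
    using ij by simp
qed

lemma diagonal_matrix_anticomm_iff:
  fixes d :: "nat \<Rightarrow> 'a::comm_ring_1"
  assumes B: "B \<in> carrier_mat n n"
  shows "diagonal_matrix n d * B + B * diagonal_matrix n d = 0\<^sub>m n n \<longleftrightarrow>
    (\<forall>i<n. \<forall>j<n. (d i + d j) * B $$ (i, j) = 0)"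
proof -
  have entry: "(diagonal_matrix n d * B + B * diagonal_matrix n d) $$ (i, j) = (d i + d j) * B $$ (i, j)"
    if "i < n" "j < n" for i j
    using B that
    by (simp add: diagonal_matrix_mult_index[OF B that] algebra_simps del: index_mult_mat(1))
  show ?thesis
  proof
    assume "diagonal_matrix n d * B + B * diagonal_matrix n d = 0\<^sub>m n n"
    then show "\<forall>i<n. \<forall>j<n. (d i + d j) * B $$ (i, j) = 0"
      using entry by (metis index_zero_mat(1))
  next
    assume "\<forall>i<n. \<forall>j<n. (d i + d j) * B $$ (i, j) = 0"
    then show "diagonal_matrix n d * B + B * diagonal_matrix n d = 0\<^sub>m n n"
      using B entry by (intro eq_matI) auto
  qed
qed

lemma GL_inv_det_nonzero: "GL_inv n g h \<Longrightarrow> det g \<noteq> 0"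
  unfolding GL_inv_def by (metis det_mult det_one mult_zero_left zero_neq_one)

lemma GL_inv_adj_mat:
  assumes "GL_inv n g h"
  shows "adj_mat g = det g \<cdot>\<^sub>m h"
proof -
  have g: "g \<in> carrier_mat n n" and h: "h \<in> carrier_mat n n" and gh: "g * h = 1\<^sub>m n"
    using assms unfolding GL_inv_def by auto
  have adj: "adj_mat g \<in> carrier_mat n n" "adj_mat g * g = det g \<cdot>\<^sub>m 1\<^sub>m n"
    using adj_mat[OF g] by auto
  have "adj_mat g = adj_mat g * (g * h)" using adj gh by simp
  also have "\<dots> = (adj_mat g * g) * h" using assoc_mult_mat[OF adj(1) g h] by simp
  also have "\<dots> = det g \<cdot>\<^sub>m h"
    unfolding adj(2) using mult_smult_assoc_mat[OF one_carrier_mat h] h by simp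
  finally show ?thesis .
qed

lemma GL_inv_adj_mat_scaled:
  assumes g: "g \<in> carrier_mat n n" and "det g \<noteq> 0"
  shows "GL_inv n g ((1 / det g) \<cdot>\<^sub>m adj_mat g)"
  using assms adj_mat[OF g] unfolding GL_inv_def
  by (auto simp: mult_smult_distrib[of _ n n] mult_smult_assoc_mat[of _ n n])

lemma conj_adj_mat:
  assumes "GL_inv n g h" "M \<in> carrier_mat n n"
  shows "g * M * adj_mat g = g * (det g \<cdot>\<^sub>m M) * h"
proof -
  have "g \<in> carrier_mat n n" "h \<in> carrier_mat n n" using assms(1) unfolding GL_inv_def by auto
  then show ?thesis unfolding GL_inv_adj_mat[OF assms(1)] using assms(2)
    by (simp add: mult_smult_distrib[of _ n n] mult_smult_assoc_mat[of _ n n])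
qed

lemma GL_inv_mult:
  assumes "GL_inv n g h" "GL_inv n g' h'"
  shows "GL_inv n (g * g') (h' * h)"
proof -
  have c: "g \<in> carrier_mat n n" "h \<in> carrier_mat n n" "g' \<in> carrier_mat n n" "h' \<in> carrier_mat n n"
    using assms unfolding GL_inv_def by auto
  have "g * g' * (h' * h) = g * (g' * h') * h" "h' * h * (g * g') = h' * (h * g) * g'"
    using c by (simp_all add: assoc_mult_mat[of _ n n _ n _ n])
  then show ?thesis using assms c unfolding GL_inv_def by simp
qed

lemma similar_mat_wit_GL_inv:
  assumes "similar_mat_wit X Y P Q" "X \<in> carrier_mat n n"
  shows "GL_inv n P Q" "X = P * Y * Q" "Y \<in> carrier_mat n n"
  using similar_mat_witD2[OF assms(2,1)] unfolding GL_inv_def by auto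

lemma conj_similar_mat_wit:
  assumes gh: "GL_inv n g h" and X: "similar_mat_wit X X' k k'" "X \<in> carrier_mat n n"
    and Y: "similar_mat_wit Y Y' k k'" "Y \<in> carrier_mat n n"
  shows "GL_inv n (g * k) (k' * h)" "g * X * h = (g * k) * X' * (k' * h)"
    "g * Y * h = (g * k) * Y' * (k' * h)"
proof -
  have k: "GL_inv n k k'" and X': "X' \<in> carrier_mat n n" and Y': "Y' \<in> carrier_mat n n"
    and "X = k * X' * k'" "Y = k * Y' * k'"
    using similar_mat_wit_GL_inv[OF X] similar_mat_wit_GL_inv[OF Y] by auto
  moreover have "g \<in> carrier_mat n n" "h \<in> carrier_mat n n" "k \<in> carrier_mat n n" "k' \<in> carrier_mat n n"
    using gh k unfolding GL_inv_def by auto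
  ultimately show "GL_inv n (g * k) (k' * h)" "g * X * h = (g * k) * X' * (k' * h)"
    "g * Y * h = (g * k) * Y' * (k' * h)"
    using GL_inv_mult[OF gh k] X' Y' by (simp_all add: assoc_mult_mat[of _ n n _ n _ n])
qed

lemma similar_mat_wit_lower_block:
  assumes wit: "similar_mat_wit T T' P Q" and T: "T \<in> carrier_mat r r" and X: "X \<in> carrier_mat s s"
  shows "similar_mat_wit (four_block_mat X (0\<^sub>m s r) (0\<^sub>m r s) T) (four_block_mat X (0\<^sub>m s r) (0\<^sub>m r s) T')
    (four_block_mat (1\<^sub>m s) (0\<^sub>m s r) (0\<^sub>m r s) P) (four_block_mat (1\<^sub>m s) (0\<^sub>m s r) (0\<^sub>m r s) Q)"
proof (rule similar_mat_wit_four_block[OF similar_mat_wit_refl[OF X] wit _ _ X T])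
  have "P \<in> carrier_mat r r" "Q \<in> carrier_mat r r" using similar_mat_witD2[OF T wit] by auto
  then show "0\<^sub>m s r = 1\<^sub>m s * 0\<^sub>m s r * Q" "0\<^sub>m r s = P * 0\<^sub>m r s * 1\<^sub>m s" by simp_all
qed simp_all

lemma similar_mat_wit_zero:
  assumes "similar_mat_wit T T' P Q" "T \<in> carrier_mat r r"
  shows "similar_mat_wit (0\<^sub>m r r) (0\<^sub>m r r) P Q"
  using similar_mat_witD2[OF assms(2,1)] by (intro similar_mat_witI) auto

lemma upper_triangular_smult:
  fixes A :: "'a::semiring_0 mat"
  shows "A \<in> carrier_mat n n \<Longrightarrow> upper_triangular A \<Longrightarrow> upper_triangular (d \<cdot>\<^sub>m A)"
  unfolding upper_triangular_def by auto

lemma similar_mat_wit_upper_triangular: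
  fixes C :: "complex mat"
  assumes "C \<in> carrier_mat r r"
  obtains J P Q where "upper_triangular J" "similar_mat_wit C J P Q"
proof -
  obtain as where "char_poly C = (\<Prod>a\<leftarrow>as. [:- a, 1:])"
    using char_poly_factorized[OF assms] by blast
  then obtain J where "upper_triangular J" "similar_mat C J"
    using schur_decomposition_exists[OF assms] by blast
  then show ?thesis using that unfolding similar_mat_def by blast
qed

lemma order_prod_distinct_linear_factors:
  fixes ts :: "'a::idom list"
  assumes "distinct ts"
  shows "order a (\<Prod>t\<leftarrow>ts. [:- t, 1:]) \<le> 1"
proof -
  have "order a (\<Prod>t\<leftarrow>ts. [:- t, 1:]) = (\<Sum>t\<leftarrow>ts. if t = a then 1 else 0)"
    by (subst order_prod_list) (auto simp: order_linear' comp_def)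
  also have "\<dots> = (\<Sum>t\<in>set ts. if t = a then 1 else 0)"
    using assms by (rule sum_list_distinct_conv_sum_set)
  finally show ?thesis by simp
qed

lemma jordan_matrix_unit_blocks:
  assumes "\<forall>(k, a)\<in>set n_as. k = 1"
  shows "jordan_matrix n_as = diagonal_matrix (length n_as) (\<lambda>i. snd (n_as ! i))"
  using assms
proof (induction n_as)
  case Nil
  then show ?case by (auto simp: jordan_matrix_def diagonal_matrix_def)
next
  case (Cons na n_as)
  obtain a where na: "na = (1, a)" using Cons.prems by auto
  have len: "sum_list (map fst n_as) = length n_as"
    using Cons.prems by (induction n_as) auto
  have IH: "jordan_matrix n_as = diagonal_matrix (length n_as) (\<lambda>i. snd (n_as ! i))"
    using Cons by simp
  show ?case
    unfolding na jordan_matrix_Cons len IH by (rule eq_matI) (auto simp: nth_Cons')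
qed

text \<open>Distinct eigenvalues are simple roots of the characteristic polynomial, so all Jordan
  blocks have size one.\<close>

lemma similar_mat_wit_diagonal_if_distinct_diag:
  fixes T :: "complex mat"
  assumes T: "T \<in> carrier_mat r r" and ut: "upper_triangular T"
    and dist: "\<And>i j. i < r \<Longrightarrow> j < r \<Longrightarrow> i \<noteq> j \<Longrightarrow> T $$ (i, i) \<noteq> T $$ (j, j)"
  obtains e P Q where "similar_mat_wit T (diagonal_matrix r e) P Q"
proof -
  have cp: "char_poly T = (\<Prod>a\<leftarrow>diag_mat T. [:- a, 1:])"
    by (rule char_poly_upper_triangular[OF T ut])
  obtain n_as where jnf: "jordan_nf T n_as" using jordan_nf_exists[OF T cp] by blast
  have "distinct (diag_mat T)"
    unfolding diag_mat_def using T dist by (auto simp: distinct_map inj_on_def) blast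
  then have order: "order a (char_poly T) \<le> 1" for a
    unfolding cp by (rule order_prod_distinct_linear_factors)
  have unit: "\<forall>(k, a)\<in>set n_as. k = 1"
  proof clarify
    fix k a assume mem: "(k, a) \<in> set n_as"
    have "k \<le> 1" using jordan_nf_block_size_order_bound[OF jnf mem] order[of a] by linarith
    moreover have "k \<noteq> 0" using jnf mem unfolding jordan_nf_def by force
    ultimately show "k = 1" by simp
  qed
  obtain P Q where wit: "similar_mat_wit T (jordan_matrix n_as) P Q"
    using jnf unfolding jordan_nf_def similar_mat_def by blast
  have "sum_list (map fst n_as) = length n_as"
    using unit by (induction n_as) auto
  moreover have "jordan_matrix n_as \<in> carrier_mat r r"
    using similar_mat_witD2[OF T wit] by blast
  ultimately have "length n_as = r" by (metis carrier_matD(1) jordan_matrix_dim(1))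
  then show ?thesis using that wit jordan_matrix_unit_blocks[OF unit] by auto
qed

section \<open>The normal forms of A and B\<close>

definition diag_entry :: "nat \<Rightarrow> nat \<Rightarrow> (nat \<Rightarrow> complex) \<Rightarrow> nat \<Rightarrow> complex" where
  "diag_entry p m a i = (if i < 2*p then (if even i then a (i div 2) else - a (i div 2))
     else if i < 2*p + m then a (i - p) else 0)"

lemma length_concat_pairs: "length (concat (map (\<lambda>i. [a i, - a i]) [0..<p])) = 2*p"
  by (induction p) auto

lemma nth_concat_pairs:
  "i < 2*p \<Longrightarrow> concat (map (\<lambda>i. [a i, - a i]) [0..<p]) ! i = (if even i then a (i div 2) else - a (i div 2))"
proof (induction p)
  case (Suc p)
  show ?case
  proof (cases "i < 2*p")
    case True
    then show ?thesis using Suc by (simp add: nth_append length_concat_pairs)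
  next
    case False
    then have "i = 2*p \<or> i = 2*p + 1" using Suc.prems by auto
    then show ?thesis by (auto simp: nth_append length_concat_pairs)
  qed
qed simp

lemma A_mat_eq_diagonal: "A_mat p m r a = diagonal_matrix (2*p + m + r) (diag_entry p m a)"
  unfolding A_mat_def Let_def diagonal_matrix_def diag_entries_def diag_entry_def
  by (rule eq_matI) (auto simp: nth_append length_concat_pairs nth_concat_pairs)

lemma A_mat_carrier [simp]: "A_mat p m r a \<in> carrier_mat (2*p + m + r) (2*p + m + r)"
  unfolding A_mat_eq_diagonal by simp

lemma A_mat_smult: "d \<cdot>\<^sub>m A_mat p m r a = A_mat p m r (\<lambda>k. d * a k)"
  unfolding A_mat_eq_diagonal by (rule eq_matI) (auto simp: diag_entry_def)

lemma A_mat_four_block: "A_mat p m r a = four_block_mat (A_mat p m 0 a) (0\<^sub>m (2*p + m) r) (0\<^sub>m r (2*p + m)) (0\<^sub>m r r)"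
  unfolding A_mat_eq_diagonal by (rule eq_matI) (auto simp: diag_entry_def)

definition same_pair :: "nat \<Rightarrow> nat \<Rightarrow> nat \<Rightarrow> bool" where
  "same_pair p i j \<longleftrightarrow> i < 2*p \<and> j < 2*p \<and> i div 2 = j div 2 \<and> i \<noteq> j"

lemma diag_entry_add_eq_0:
  assumes "same_pair p i j \<or> (2*p + m \<le> i \<and> 2*p + m \<le> j)"
  shows "diag_entry p m a i + diag_entry p m a j = 0"
proof -
  have "even i \<longleftrightarrow> odd j" if "i div 2 = j div 2" "i \<noteq> j"
    using that by presburger
  then show ?thesis using assms unfolding same_pair_def diag_entry_def by auto
qed

definition param_index :: "nat \<Rightarrow> nat \<Rightarrow> nat" where
  "param_index p i = (if i < 2*p then i div 2 else i - p)"

lemma diag_entry_param_index: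
  "i < 2*p + m \<Longrightarrow> diag_entry p m a i = a (param_index p i) \<or> diag_entry p m a i = - a (param_index p i)"
  "i < 2*p + m \<Longrightarrow> param_index p i < p + m"
  unfolding diag_entry_def param_index_def by auto

lemma generic_diag_entry_add_eq_0:
  assumes gen: "generic_params p m a" and sum: "diag_entry p m a i + diag_entry p m a j = 0"
  shows "same_pair p i j \<or> (2*p + m \<le> i \<and> 2*p + m \<le> j)"
proof -
  have nonzero: "diag_entry p m a k \<noteq> 0" if "k < 2*p + m" for k
  proof -
    have "a (param_index p k) \<noteq> 0"
      using gen diag_entry_param_index(2)[OF that] unfolding generic_params_def by blast
    then show ?thesis using diag_entry_param_index(1)[OF that, of a] by auto
  qed
  have zero: "diag_entry p m a k = 0" if "\<not> k < 2*p + m" for k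
    using that unfolding diag_entry_def by simp
  consider "i < 2*p + m" "j < 2*p + m" | "2*p + m \<le> i" "2*p + m \<le> j"
    | "i < 2*p + m" "2*p + m \<le> j" | "2*p + m \<le> i" "j < 2*p + m"
    by linarith
  then show ?thesis
  proof cases
    case 1
    have "param_index p i = param_index p j"
    proof (rule ccontr)
      assume "param_index p i \<noteq> param_index p j"
      then have "a (param_index p i) \<noteq> a (param_index p j)" "a (param_index p i) \<noteq> - a (param_index p j)"
        using gen diag_entry_param_index(2)[OF 1(1)] diag_entry_param_index(2)[OF 1(2)]
        unfolding generic_params_def by blast+
      then show False
        using sum diag_entry_param_index(1)[OF 1(1), of a] diag_entry_param_index(1)[OF 1(2), of a]
        by (auto simp: add_eq_0_iff minus_equation_iff)
    qed
    moreover have "i \<noteq> j" using sum nonzero[OF 1(1)] by auto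
    ultimately show ?thesis
      using 1 unfolding same_pair_def param_index_def by (auto split: if_splits)
  next
    case 2
    then show ?thesis by simp
  next
    case 3
    then show ?thesis using sum nonzero[of i] zero[of j] by simp
  next
    case 4
    then show ?thesis using sum nonzero[of j] zero[of i] by simp
  qed
qed

lemma B_mat_index:
  assumes "i < 2*p + m + r" "j < 2*p + m + r"
  shows "B_mat p m r b c $$ (i, j) =
    (if same_pair p i j then (if even i then b (i div 2) else c (i div 2))
     else if 2*p + m \<le> i \<and> i = j then b (p + (i - (2*p + m))) else 0)"
proof -
  have "(i < 2*p \<and> j < 2*p \<and> i div 2 = j div 2 \<and> even i \<and> j = i + 1) \<longleftrightarrow> same_pair p i j \<and> even i"
    and "(i < 2*p \<and> j < 2*p \<and> i div 2 = j div 2 \<and> odd i \<and> i = j + 1) \<longleftrightarrow> same_pair p i j \<and> odd i"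
    unfolding same_pair_def by presburger+
  moreover have "\<not> (2*p + m \<le> i \<and> i = j)" if "same_pair p i j"
    using that unfolding same_pair_def by simp
  ultimately show ?thesis
    using assms unfolding B_mat_def Let_def by (simp only: index_mat split_conv) auto
qed

lemma B_mat_carrier [simp]: "B_mat p m r b c \<in> carrier_mat (2*p + m + r) (2*p + m + r)"
  and B_mat_dim [simp]: "dim_row (B_mat p m r b c) = 2*p + m + r" "dim_col (B_mat p m r b c) = 2*p + m + r"
  unfolding B_mat_def Let_def by simp_all

text \<open>\<^term>\<open>B_mat p m 0 b c\<close> is the part of \<^term>\<open>B_mat p m r b c\<close> on the first
  \<open>2p + m\<close> coordinates; \<^term>\<open>B_block\<close> replaces the diagonal trailing block by an arbitrary one.\<close>

definition B_block ::
  "nat \<Rightarrow> nat \<Rightarrow> nat \<Rightarrow> (nat \<Rightarrow> complex) \<Rightarrow> (nat \<Rightarrow> complex) \<Rightarrow> complex mat \<Rightarrow> complex mat" where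
  "B_block p m r b c T = four_block_mat (B_mat p m 0 b c) (0\<^sub>m (2*p + m) r) (0\<^sub>m r (2*p + m)) T"

lemma B_block_carrier [simp]:
  "T \<in> carrier_mat r r \<Longrightarrow> B_block p m r b c T \<in> carrier_mat (2*p + m + r) (2*p + m + r)"
  unfolding B_block_def using B_mat_carrier[of p m 0 b c] by (intro four_block_carrier_mat) simp_all

lemma B_block_dim [simp]:
  "dim_row (B_block p m r b c T) = 2*p + m + dim_row T" "dim_col (B_block p m r b c T) = 2*p + m + dim_col T"
  unfolding B_block_def by simp_all

lemma B_block_index:
  assumes T: "T \<in> carrier_mat r r" and ij: "i < 2*p + m + r" "j < 2*p + m + r"
  shows "B_block p m r b c T $$ (i, j) =
    (if same_pair p i j then (if even i then b (i div 2) else c (i div 2))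
     else if 2*p + m \<le> i \<and> 2*p + m \<le> j then T $$ (i - (2*p + m), j - (2*p + m)) else 0)"
proof -
  have "B_block p m r b c T $$ (i, j) = (if i < 2*p + m then if j < 2*p + m then B_mat p m 0 b c $$ (i, j)
      else 0 else if j < 2*p + m then 0 else T $$ (i - (2*p + m), j - (2*p + m)))"
    using T ij unfolding B_block_def by simp
  moreover have "\<not> same_pair p i j" if "2*p + m \<le> i \<or> 2*p + m \<le> j"
    using that unfolding same_pair_def by auto
  ultimately show ?thesis
    using B_mat_index[of i p m 0 j b c] by auto
qed

lemma B_block_diagonal:
  "B_block p m r b c (diagonal_matrix r e) = B_mat p m r (\<lambda>k. if k < p then b k else e (k - p)) c"
proof (rule eq_matI)
  fix i j assume "i < dim_row (B_mat p m r (\<lambda>k. if k < p then b k else e (k - p)) c)"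
    "j < dim_col (B_mat p m r (\<lambda>k. if k < p then b k else e (k - p)) c)"
  then have ij: "i < 2*p + m + r" "j < 2*p + m + r" by simp_all
  have "i div 2 < p" if "same_pair p i j" using that unfolding same_pair_def by auto
  moreover have "i - (p + m + p) = i - (2*p + m)" by simp
  ultimately show "B_block p m r b c (diagonal_matrix r e) $$ (i, j) =
      B_mat p m r (\<lambda>k. if k < p then b k else e (k - p)) c $$ (i, j)"
    using ij by (auto simp: B_block_index[OF diagonal_matrix_carrier ij] B_mat_index[OF ij])
qed (simp_all add: B_block_def)

lemma B_block_smult:
  assumes "T \<in> carrier_mat r r"
  shows "d \<cdot>\<^sub>m B_block p m r b c T = B_block p m r (\<lambda>k. d * b k) (\<lambda>k. d * c k) (d \<cdot>\<^sub>m T)"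
proof (rule eq_matI)
  fix i j assume "i < dim_row (B_block p m r (\<lambda>k. d * b k) (\<lambda>k. d * c k) (d \<cdot>\<^sub>m T))"
    "j < dim_col (B_block p m r (\<lambda>k. d * b k) (\<lambda>k. d * c k) (d \<cdot>\<^sub>m T))"
  then have ij: "i < 2*p + m + r" "j < 2*p + m + r" using assms by auto
  show "(d \<cdot>\<^sub>m B_block p m r b c T) $$ (i, j) =
      B_block p m r (\<lambda>k. d * b k) (\<lambda>k. d * c k) (d \<cdot>\<^sub>m T) $$ (i, j)"
    using assms ij by (auto simp: B_block_index[OF assms ij] B_block_index[OF smult_carrier_mat[OF assms] ij])
qed simp_all

lemma A_mat_anticomm_B_block:
  assumes T: "T \<in> carrier_mat r r"
  shows "(A_mat p m r a, B_block p m r b c T) \<in> anticomm_var (2*p + m + r)"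
proof -
  have "(diag_entry p m a i + diag_entry p m a j) * B_block p m r b c T $$ (i, j) = 0"
    if "i < 2*p + m + r" "j < 2*p + m + r" for i j
    using diag_entry_add_eq_0[of p i j m a] unfolding B_block_index[OF T that] by auto
  then show ?thesis
    using T unfolding anticomm_var_def A_mat_eq_diagonal
    by (simp add: diagonal_matrix_anticomm_iff)
qed

lemma generic_anticomm_entry_eq_0:
  assumes gen: "generic_params p m a" and ac: "(A_mat p m r a, B) \<in> anticomm_var (2*p + m + r)"
    and ij: "i < 2*p + m + r" "j < 2*p + m + r"
    and "\<not> same_pair p i j" "\<not> (2*p + m \<le> i \<and> 2*p + m \<le> j)"
  shows "B $$ (i, j) = 0"
proof -
  have "B \<in> carrier_mat (2*p + m + r) (2*p + m + r)" using ac unfolding anticomm_var_def by auto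
  then have "(diag_entry p m a i + diag_entry p m a j) * B $$ (i, j) = 0"
    using ac ij unfolding anticomm_var_def A_mat_eq_diagonal by (simp add: diagonal_matrix_anticomm_iff)
  moreover have "diag_entry p m a i + diag_entry p m a j \<noteq> 0"
    using generic_diag_entry_add_eq_0[OF gen] assms(5,6) by blast
  ultimately show ?thesis by simp
qed

lemma generic_anticomm_eq_B_block:
  assumes gen: "generic_params p m a" and ac: "(A_mat p m r a, B) \<in> anticomm_var (2*p + m + r)"
  shows "B = B_block p m r (\<lambda>k. B $$ (2*k, 2*k + 1)) (\<lambda>k. B $$ (2*k + 1, 2*k))
    (mat r r (\<lambda>(i, j). B $$ (i + (2*p + m), j + (2*p + m))))"
    (is "B = B_block p m r ?b ?c ?T")
proof (rule eq_matI)
  have T: "?T \<in> carrier_mat r r" by simp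
  fix i j assume "i < dim_row (B_block p m r ?b ?c ?T)" "j < dim_col (B_block p m r ?b ?c ?T)"
  then have ij: "i < 2*p + m + r" "j < 2*p + m + r" by simp_all
  show "B $$ (i, j) = B_block p m r ?b ?c ?T $$ (i, j)"
  proof (cases "same_pair p i j")
    case True
    then have "i div 2 = j div 2" "i \<noteq> j" unfolding same_pair_def by auto
    then have "(even i \<and> 2 * (i div 2) = i \<and> 2 * (i div 2) + 1 = j) \<or>
        (odd i \<and> 2 * (i div 2) + 1 = i \<and> 2 * (i div 2) = j)"
      by presburger
    then show ?thesis using True by (auto simp: B_block_index[OF T ij])
  next
    case False
    then show ?thesis
      using generic_anticomm_entry_eq_0[OF gen ac ij False] ij by (auto simp: B_block_index[OF T ij])
  qed
qed (use ac in \<open>auto simp: anticomm_var_def\<close>)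

definition genericity_poly :: "nat \<Rightarrow> nat \<Rightarrow> (nat \<Rightarrow> complex) \<Rightarrow> complex" where
  "genericity_poly p m a = (\<Prod>i<p + m. a i * (\<Prod>j\<in>{..<p + m} - {i}. (a i - a j) * (a i + a j)))"

lemma genericity_poly_nonzero_iff: "genericity_poly p m a \<noteq> 0 \<longleftrightarrow> generic_params p m a"
  unfolding genericity_poly_def generic_params_def by (auto simp: prod_zero_iff add_eq_0_iff2)

lemma generic_params_smult: "generic_params p m a \<Longrightarrow> d \<noteq> 0 \<Longrightarrow> generic_params p m (\<lambda>k. d * a k)"
  unfolding generic_params_def by (simp flip: mult_minus_right)

lemma generic_params_of_nat: "generic_params p m (\<lambda>k. of_nat (Suc k))"
proof -
  have "of_nat (Suc i) \<noteq> - (of_nat (Suc j) :: complex)" for i j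
  proof
    assume "of_nat (Suc i) = - (of_nat (Suc j) :: complex)"
    then have "of_nat (Suc i + Suc j) = (0 :: complex)" by (simp only: of_nat_add) simp
    then show False by (simp only: of_nat_eq_0_iff)
  qed
  then show ?thesis unfolding generic_params_def by (simp del: of_nat_Suc)
qed

lemma conj_lower_block_similar:
  assumes gh: "GL_inv (2*p + m + r) g h" and wit: "similar_mat_wit T T' P Q" and T: "T \<in> carrier_mat r r"
  obtains g' h' where "GL_inv (2*p + m + r) g' h'" "g * A_mat p m r a * h = g' * A_mat p m r a * h'"
    "g * B_block p m r b c T * h = g' * B_block p m r b c T' * h'"
proof -
  let ?K = "\<lambda>P. four_block_mat (1\<^sub>m (2*p + m)) (0\<^sub>m (2*p + m) r) (0\<^sub>m r (2*p + m)) P"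
  have "similar_mat_wit (four_block_mat (A_mat p m 0 a) (0\<^sub>m (2*p + m) r) (0\<^sub>m r (2*p + m)) (0\<^sub>m r r))
      (four_block_mat (A_mat p m 0 a) (0\<^sub>m (2*p + m) r) (0\<^sub>m r (2*p + m)) (0\<^sub>m r r)) (?K P) (?K Q)"
    using A_mat_carrier[of p m 0 a] by (intro similar_mat_wit_lower_block[OF similar_mat_wit_zero[OF wit T]]) simp_all
  then have A: "similar_mat_wit (A_mat p m r a) (A_mat p m r a) (?K P) (?K Q)"
    by (simp only: A_mat_four_block[symmetric])
  have B: "similar_mat_wit (B_block p m r b c T) (B_block p m r b c T') (?K P) (?K Q)"
    unfolding B_block_def using B_mat_carrier[of p m 0 b c]
    by (intro similar_mat_wit_lower_block[OF wit T]) simp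
  show ?thesis
    by (rule that[OF conj_similar_mat_wit[OF gh A A_mat_carrier B B_block_carrier[OF T]]])
qed

section \<open>A polynomial parametrization of the orbits\<close>

datatype coord = G_coord nat nat | A_coord nat | B_coord nat | C_coord nat | T_coord nat nat

definition gl_coord :: "nat \<Rightarrow> (coord \<Rightarrow> complex) \<Rightarrow> complex mat" where
  "gl_coord n x = mat n n (\<lambda>(i, j). x (G_coord i j))"

definition tri_coord :: "nat \<Rightarrow> (coord \<Rightarrow> complex) \<Rightarrow> complex mat" where
  "tri_coord r x = mat r r (\<lambda>(i, j). if i \<le> j then x (T_coord i j) else 0)"

definition orbit_param :: "nat \<Rightarrow> nat \<Rightarrow> nat \<Rightarrow> (coord \<Rightarrow> complex) \<Rightarrow> cpair" where
  "orbit_param p m r x =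
    (gl_coord (2*p + m + r) x * A_mat p m r (\<lambda>k. x (A_coord k)) * adj_mat (gl_coord (2*p + m + r) x),
     gl_coord (2*p + m + r) x * B_block p m r (\<lambda>k. x (B_coord k)) (\<lambda>k. x (C_coord k)) (tri_coord r x)
       * adj_mat (gl_coord (2*p + m + r) x))"

definition coords_of ::
  "complex mat \<Rightarrow> (nat \<Rightarrow> complex) \<Rightarrow> (nat \<Rightarrow> complex) \<Rightarrow> (nat \<Rightarrow> complex) \<Rightarrow> complex mat \<Rightarrow> coord \<Rightarrow> complex"
  where
  "coords_of g a b c T v = (case v of G_coord i j \<Rightarrow> g $$ (i, j) | A_coord k \<Rightarrow> a k | B_coord k \<Rightarrow> b k
     | C_coord k \<Rightarrow> c k | T_coord i j \<Rightarrow> T $$ (i, j))"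

lemma gl_coord_carrier [simp]: "gl_coord n x \<in> carrier_mat n n"
  unfolding gl_coord_def by simp

lemma tri_coord_carrier [simp]: "tri_coord r x \<in> carrier_mat r r"
  unfolding tri_coord_def by simp

lemma gl_coord_coords_of: "g \<in> carrier_mat n n \<Longrightarrow> gl_coord n (coords_of g a b c T) = g"
  unfolding gl_coord_def coords_of_def by (rule eq_matI) auto

lemma tri_coord_coords_of:
  "T \<in> carrier_mat r r \<Longrightarrow> upper_triangular T \<Longrightarrow> tri_coord r (coords_of g a b c T) = T"
  unfolding tri_coord_def coords_of_def upper_triangular_def by (rule eq_matI) auto

lemma upper_triangular_tri_coord: "upper_triangular (tri_coord r x)"
  unfolding tri_coord_def upper_triangular_def by simp

lemma mpoly_mat_gl_coord: "mpoly_mat n n (gl_coord n)"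
  unfolding gl_coord_def by (intro mpoly_mat_mat mpoly_fun_var)

lemma mpoly_pair_map_orbit_param: "mpoly_pair_map (2*p + m + r) (orbit_param p m r)"
proof -
  have A: "mpoly_mat (2*p + m + r) (2*p + m + r) (\<lambda>x. A_mat p m r (\<lambda>k. x (A_coord k)))"
    unfolding A_mat_eq_diagonal diagonal_matrix_def diag_entry_def
    by (intro mpoly_mat_mat mpoly_fun_If mpoly_fun_uminus mpoly_fun_var mpoly_fun_const)
  have "mpoly_mat (2*p + m) (2*p + m) (\<lambda>x. B_mat p m 0 (\<lambda>k. x (B_coord k)) (\<lambda>k. x (C_coord k)))"
    unfolding B_mat_def Let_def by (auto intro!: mpoly_mat_mat mpoly_fun_If mpoly_fun_var mpoly_fun_const)
  moreover have "mpoly_mat r r (tri_coord r)"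
    unfolding tri_coord_def by (intro mpoly_mat_mat mpoly_fun_If mpoly_fun_var mpoly_fun_const)
  ultimately have B: "mpoly_mat (2*p + m + r) (2*p + m + r)
      (\<lambda>x. B_block p m r (\<lambda>k. x (B_coord k)) (\<lambda>k. x (C_coord k)) (tri_coord r x))"
    unfolding B_block_def by (intro mpoly_mat_four_block mpoly_mat_const) simp_all
  show ?thesis
    unfolding mpoly_pair_map_def orbit_param_def fst_conv snd_conv
    using mpoly_mat_mult[OF mpoly_mat_mult[OF mpoly_mat_gl_coord A] mpoly_mat_adj[OF mpoly_mat_gl_coord]]
      mpoly_mat_mult[OF mpoly_mat_mult[OF mpoly_mat_gl_coord B] mpoly_mat_adj[OF mpoly_mat_gl_coord]]
    by simp
qed

lemma mpoly_fun_det_gl_coord: "(\<lambda>x. det (gl_coord n x)) \<in> mpoly_fun"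
  by (rule mpoly_fun_det[OF mpoly_mat_gl_coord])

lemma ex_det_gl_coord_nonzero: "\<exists>x. det (gl_coord n x) \<noteq> 0"
  using gl_coord_coords_of[OF one_carrier_mat, of n] by (metis det_one one_neq_zero)

lemma orbit_param_eq_conj:
  assumes "det (gl_coord (2*p + m + r) x) \<noteq> 0"
  obtains g h d where "GL_inv (2*p + m + r) g h" "d \<noteq> 0"
    "orbit_param p m r x = (g * A_mat p m r (\<lambda>k. d * x (A_coord k)) * h,
       g * B_block p m r (\<lambda>k. d * x (B_coord k)) (\<lambda>k. d * x (C_coord k)) (d \<cdot>\<^sub>m tri_coord r x) * h)"
proof -
  let ?g = "gl_coord (2*p + m + r) x"
  have gh: "GL_inv (2*p + m + r) ?g ((1 / det ?g) \<cdot>\<^sub>m adj_mat ?g)"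
    by (rule GL_inv_adj_mat_scaled[OF gl_coord_carrier assms])
  show ?thesis
    by (rule that[OF gh assms]) (simp add: orbit_param_def conj_adj_mat[OF gh] A_mat_smult B_block_smult)
qed

lemma conj_in_orbit_param_image:
  assumes gh: "GL_inv (2*p + m + r) g h" and T: "T \<in> carrier_mat r r" "upper_triangular T"
  shows "(g * A_mat p m r a * h, g * B_block p m r b c T * h)
    \<in> orbit_param p m r ` {x. det (gl_coord (2*p + m + r) x) \<noteq> 0}"
proof
  let ?d = "det g"
  let ?x = "coords_of g (\<lambda>k. a k / ?d) (\<lambda>k. b k / ?d) (\<lambda>k. c k / ?d) ((1 / ?d) \<cdot>\<^sub>m T)"
  have d: "?d \<noteq> 0" by (rule GL_inv_det_nonzero[OF gh])
  have g: "g \<in> carrier_mat (2*p + m + r) (2*p + m + r)" using gh unfolding GL_inv_def by simp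
  have "upper_triangular ((1 / ?d) \<cdot>\<^sub>m T)" using upper_triangular_smult[OF T] .
  then have x: "gl_coord (2*p + m + r) ?x = g" "tri_coord r ?x = (1 / ?d) \<cdot>\<^sub>m T"
    using g T by (simp_all add: gl_coord_coords_of tri_coord_coords_of)
  have "?d \<cdot>\<^sub>m ((1 / ?d) \<cdot>\<^sub>m T) = T" using d by (intro eq_matI) auto
  then show "(g * A_mat p m r a * h, g * B_block p m r b c T * h) = orbit_param p m r ?x"
    using d T unfolding orbit_param_def x
    by (simp add: conj_adj_mat[OF gh] A_mat_smult B_block_smult coords_of_def)
  show "?x \<in> {x. det (gl_coord (2*p + m + r) x) \<noteq> 0}" using d x by simp
qed

section \<open>Generic orbits and the image of \<phi>\<close>

definition generic_orbits :: "nat \<Rightarrow> nat \<Rightarrow> nat \<Rightarrow> cpair set" where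
  "generic_orbits p m r = {(g * A_mat p m r a * h, g * B * h) | g h a B.
     GL_inv (2*p + m + r) g h \<and> generic_params p m a \<and> (A_mat p m r a, B) \<in> anticomm_var (2*p + m + r)}"

lemma Z_pmr_eq_closure_generic_orbits: "Z_pmr p m r = zariski_closure (2*p + m + r) (generic_orbits p m r)"
  unfolding Z_pmr_def generic_orbits_def Let_def ..

lemma mpoly_fun_genericity_poly: "(\<lambda>x. genericity_poly p m (\<lambda>k. x (A_coord k))) \<in> mpoly_fun"
  unfolding genericity_poly_def
  by (intro mpoly_fun_prod mpoly_fun_mult mpoly_fun_diff mpoly_fun_add mpoly_fun_var) simp_all

lemma ex_genericity_poly_nonzero: "\<exists>x. genericity_poly p m (\<lambda>k. x (A_coord k)) \<noteq> 0"
proof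
  show "genericity_poly p m (\<lambda>k. (\<lambda>v. case v of A_coord i \<Rightarrow> of_nat (Suc i) | _ \<Rightarrow> 0) (A_coord k)) \<noteq> 0"
    using generic_params_of_nat unfolding genericity_poly_nonzero_iff by simp
qed

lemma generic_orbits_subset_orbit_param_image:
  "generic_orbits p m r \<subseteq> orbit_param p m r ` {x. det (gl_coord (2*p + m + r) x) \<noteq> 0}"
proof
  fix s assume "s \<in> generic_orbits p m r"
  then obtain g h a B where s: "s = (g * A_mat p m r a * h, g * B * h)" and gh: "GL_inv (2*p + m + r) g h"
    and gen: "generic_params p m a" and ac: "(A_mat p m r a, B) \<in> anticomm_var (2*p + m + r)"
    unfolding generic_orbits_def by blast
  define C where "C = mat r r (\<lambda>(i, j). B $$ (i + (2*p + m), j + (2*p + m)))"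
  have C: "C \<in> carrier_mat r r" unfolding C_def by simp
  obtain J P Q where J: "upper_triangular J" and wit: "similar_mat_wit C J P Q"
    using similar_mat_wit_upper_triangular[OF C] by blast
  let ?b = "\<lambda>k. B $$ (2*k, 2*k + 1)" and ?c = "\<lambda>k. B $$ (2*k + 1, 2*k)"
  have B: "B = B_block p m r ?b ?c C"
    unfolding C_def by (rule generic_anticomm_eq_B_block[OF gen ac])
  obtain g' h' where g'h': "GL_inv (2*p + m + r) g' h'"
    and s': "g * A_mat p m r a * h = g' * A_mat p m r a * h'"
      "g * B_block p m r ?b ?c C * h = g' * B_block p m r ?b ?c J * h'"
    by (rule conj_lower_block_similar[OF gh wit C])
  have "g * B * h = g * B_block p m r ?b ?c C * h"
    using B by (rule arg_cong[where f = "\<lambda>X. g * X * h"])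
  then have s_conj: "s = (g' * A_mat p m r a * h', g' * B_block p m r ?b ?c J * h')"
    unfolding s s' by simp
  have "J \<in> carrier_mat r r" using similar_mat_wit_GL_inv(3)[OF wit C] .
  from conj_in_orbit_param_image[OF g'h' this J]
  show "s \<in> orbit_param p m r ` {x. det (gl_coord (2*p + m + r) x) \<noteq> 0}"
    unfolding s_conj .
qed

lemma orbit_param_image_generic_subset_generic_orbits:
  "orbit_param p m r ` {x. det (gl_coord (2*p + m + r) x) \<noteq> 0 \<and> genericity_poly p m (\<lambda>k. x (A_coord k)) \<noteq> 0}
    \<subseteq> generic_orbits p m r"
proof (rule image_subsetI)
  fix x assume "x \<in> {x. det (gl_coord (2*p + m + r) x) \<noteq> 0 \<and> genericity_poly p m (\<lambda>k. x (A_coord k)) \<noteq> 0}"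
  then have det: "det (gl_coord (2*p + m + r) x) \<noteq> 0"
    and gen: "genericity_poly p m (\<lambda>k. x (A_coord k)) \<noteq> 0" by simp_all
  obtain g h d where "GL_inv (2*p + m + r) g h" "d \<noteq> 0"
    "orbit_param p m r x = (g * A_mat p m r (\<lambda>k. d * x (A_coord k)) * h,
       g * B_block p m r (\<lambda>k. d * x (B_coord k)) (\<lambda>k. d * x (C_coord k)) (d \<cdot>\<^sub>m tri_coord r x) * h)"
    using orbit_param_eq_conj[OF det] .
  moreover have "generic_params p m (\<lambda>k. d * x (A_coord k))" if "d \<noteq> 0" for d
    using generic_params_smult gen that unfolding genericity_poly_nonzero_iff by blast
  ultimately show "orbit_param p m r x \<in> generic_orbits p m r"
    unfolding generic_orbits_def using A_mat_anticomm_B_block smult_carrier_mat[OF tri_coord_carrier]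
    by blast
qed

lemma phi_image_subset_orbit_param_image:
  "phi_image p m r \<subseteq> orbit_param p m r ` {x. det (gl_coord (2*p + m + r) x) \<noteq> 0}"
proof
  fix s assume "s \<in> phi_image p m r"
  then obtain g h a b c where s: "s = (g * A_mat p m r a * h, g * B_mat p m r b c * h)"
    and gh: "GL_inv (2*p + m + r) g h"
    unfolding phi_image_def Let_def by blast
  have "B_mat p m r b c = B_block p m r b c (diagonal_matrix r (\<lambda>k. b (p + k)))"
    unfolding B_block_diagonal by (rule arg_cong[of _ _ "\<lambda>b. B_mat p m r b c"]) auto
  moreover have "upper_triangular (diagonal_matrix r (\<lambda>k. b (p + k)))"
    unfolding upper_triangular_def by simp
  ultimately show "s \<in> orbit_param p m r ` {x. det (gl_coord (2*p + m + r) x) \<noteq> 0}"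
    unfolding s using conj_in_orbit_param_image[OF gh diagonal_matrix_carrier] by simp
qed

definition distinct_diag_poly :: "nat \<Rightarrow> (coord \<Rightarrow> complex) \<Rightarrow> complex" where
  "distinct_diag_poly r x = (\<Prod>i<r. \<Prod>j\<in>{..<r} - {i}. x (T_coord i i) - x (T_coord j j))"

lemma mpoly_fun_distinct_diag_poly: "distinct_diag_poly r \<in> mpoly_fun"
  unfolding distinct_diag_poly_def[abs_def]
  by (intro mpoly_fun_prod mpoly_fun_diff mpoly_fun_var) simp_all

lemma ex_distinct_diag_poly_nonzero: "\<exists>x. distinct_diag_poly r x \<noteq> 0"
proof
  show "distinct_diag_poly r (\<lambda>v. case v of T_coord i j \<Rightarrow> of_nat i | _ \<Rightarrow> 0) \<noteq> 0"
    unfolding distinct_diag_poly_def by auto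
qed

lemma orbit_param_image_distinct_subset_phi_image:
  "orbit_param p m r ` {x. det (gl_coord (2*p + m + r) x) \<noteq> 0 \<and> distinct_diag_poly r x \<noteq> 0}
    \<subseteq> phi_image p m r"
proof (rule image_subsetI)
  fix x assume "x \<in> {x. det (gl_coord (2*p + m + r) x) \<noteq> 0 \<and> distinct_diag_poly r x \<noteq> 0}"
  then have det: "det (gl_coord (2*p + m + r) x) \<noteq> 0" and dist: "distinct_diag_poly r x \<noteq> 0"
    by simp_all
  obtain g h d where gh: "GL_inv (2*p + m + r) g h" and d: "d \<noteq> 0" and x:
    "orbit_param p m r x = (g * A_mat p m r (\<lambda>k. d * x (A_coord k)) * h,
       g * B_block p m r (\<lambda>k. d * x (B_coord k)) (\<lambda>k. d * x (C_coord k)) (d \<cdot>\<^sub>m tri_coord r x) * h)"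
    using orbit_param_eq_conj[OF det] .
  let ?T = "d \<cdot>\<^sub>m tri_coord r x"
  have T: "?T \<in> carrier_mat r r" "upper_triangular ?T"
    using upper_triangular_smult[OF tri_coord_carrier upper_triangular_tri_coord] by simp_all
  have "?T $$ (i, i) \<noteq> ?T $$ (j, j)" if "i < r" "j < r" "i \<noteq> j" for i j
    using dist d that unfolding distinct_diag_poly_def tri_coord_def by auto
  then obtain e P Q where wit: "similar_mat_wit ?T (diagonal_matrix r e) P Q"
    using similar_mat_wit_diagonal_if_distinct_diag[OF T] by blast
  obtain g' h' where "GL_inv (2*p + m + r) g' h'"
    "orbit_param p m r x = (g' * A_mat p m r (\<lambda>k. d * x (A_coord k)) * h',
       g' * B_block p m r (\<lambda>k. d * x (B_coord k)) (\<lambda>k. d * x (C_coord k)) (diagonal_matrix r e) * h')"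
    using conj_lower_block_similar[OF gh wit T(1)] x by metis
  then show "orbit_param p m r x \<in> phi_image p m r"
    unfolding B_block_diagonal phi_image_def Let_def by blast
qed

theorem proposition3p2:
  fixes p m r n :: nat
  assumes "2*p + m + r = n"
  shows "zariski_irreducible n (Z_pmr p m r) \<and>
         Z_pmr p m r = zariski_closure n (phi_image p m r)"
proof -
  let ?\<Psi> = "orbit_param p m r" and ?U = "{x. det (gl_coord (2*p + m + r) x) \<noteq> 0}"
  note \<Psi> = mpoly_pair_map_orbit_param[of p m r] and w = mpoly_fun_det_gl_coord[of "2*p + m + r"]
  have "Z_pmr p m r = zariski_closure (2*p + m + r) (?\<Psi> ` ?U)"
    unfolding Z_pmr_eq_closure_generic_orbits
    using orbit_param_image_generic_subset_generic_orbits generic_orbits_subset_orbit_param_image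
      image_subset_zariski_closure_restrict[OF \<Psi> w mpoly_fun_genericity_poly ex_genericity_poly_nonzero]
    by (rule zariski_closure_eq_sandwich)
  moreover have "zariski_closure (2*p + m + r) (phi_image p m r) = zariski_closure (2*p + m + r) (?\<Psi> ` ?U)"
    using orbit_param_image_distinct_subset_phi_image phi_image_subset_orbit_param_image
      image_subset_zariski_closure_restrict[OF \<Psi> w mpoly_fun_distinct_diag_poly ex_distinct_diag_poly_nonzero]
    by (rule zariski_closure_eq_sandwich)
  moreover have "zariski_irreducible (2*p + m + r) (zariski_closure (2*p + m + r) (?\<Psi> ` ?U))"
    using zariski_irreducible_closure_image[OF \<Psi> w ex_det_gl_coord_nonzero] .
  ultimately show ?thesis using assms by simp
qed

end
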